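(* Let $E$ be a real affine space of finite dimension, let $\mathcal{P}$ be a Yao-Yao partition of $E$ and let $c$ be its center. Let $\ell$ be an affine form on $E$ such that $\ell(c)=0$. Then there exists $A\in\mathcal{P}$ such that $\ell(x)\geq 0$ for all $x\in A$. Moreover, there is at most one element $A$ of $\mathcal{P}$ such that $\ell(x)>0$ for all $x\in A\setminus\{c\}$.
   Context: For a finite-dimensional real affine space $E$, $\vec{E}$ denotes its associated vector space. A set $\mathcal{P}$ of subsets of $E$ is a partition of $E$ if $\bigcup\mathcal{P}=E$ and the interiors of two distinct elements of $\mathcal{P}$ do not intersect (e.g. $\{(-\infty,a],[a,+\infty)\}$ is a partition of $\mathbb{R}$). Yao-Yao partitions and their centers are defined by induction on the dimension: if $E=\{c\}$ has dimension $0$, then $\mathcal{P}=\{\{c\}\}$ is a Yao-Yao partition of $E$ with center $c$. If $E$ has dimension $n\geq 1$, a set $\mathcal{P}$ is a Yao-Yao partition of $E$ if there exist an affine hyperplane $F$ of $E$, a vector $v\in\vec{E}\setminus\vec{F}$, and two Yao-Yao partitions $\mathcal{P}_+$ and $\mathcal{P}_-$ of $F$ having the same center $c$, such that $\mathcal{P}=\{A+\mathbb{R}_- v : A\in\mathcal{P}_-\}\cup\{A+\mathbb{R}_+ v : A\in\mathcal{P}_+\}$; the center of $\mathcal{P}$ is then $c$. *)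

theory Defs
  imports "HOL-Analysis.Analysis"
begin

text \<open>A finite-dimensional real affine space is modelled as a nonempty affine subset
  E of a Euclidean space 'a. Its direction (associated vector space) is the set of differences.\<close>

definition direction_of :: "'a::euclidean_space set \<Rightarrow> 'a set" where
  "direction_of E = {x - y | x y. x \<in> E \<and> y \<in> E}"

definition half_neg :: "'a::euclidean_space set \<Rightarrow> 'a \<Rightarrow> 'a set" where
  "half_neg A v = {a + t *\<^sub>R v | a t. a \<in> A \<and> t \<le> 0}"

definition half_pos :: "'a::euclidean_space set \<Rightarrow> 'a \<Rightarrow> 'a set" where
  "half_pos A v = {a + t *\<^sub>R v | a t. a \<in> A \<and> t \<ge> 0}"

inductive yao_yao :: "'a::euclidean_space set \<Rightarrow> 'a set set \<Rightarrow> 'a \<Rightarrow> bool" where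
  base: "yao_yao {c} {{c}} c"
| step: "\<lbrakk> affine E; aff_dim E \<ge> 1;
           affine F; F \<subseteq> E; aff_dim F = aff_dim E - 1;
           v \<in> direction_of E; v \<notin> direction_of F;
           yao_yao F Pm c; yao_yao F Pp c \<rbrakk>
         \<Longrightarrow> yao_yao E ((\<lambda>A. half_neg A v) ` Pm \<union> (\<lambda>A. half_pos A v) ` Pp) c"

definition affine_form_on :: "'a::euclidean_space set \<Rightarrow> ('a \<Rightarrow> real) \<Rightarrow> bool" where
  "affine_form_on E l \<longleftrightarrow>
     (\<forall>x\<in>E. \<forall>y\<in>E. \<forall>t::real. l ((1 - t) *\<^sub>R x + t *\<^sub>R y) = (1 - t) * l x + t * l y)"

end

theory Submission
  imports Defs
begin

text \<open>Along the direction v of the last step, an affine form l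
  changes at a constant rate w. If w \<ge> 0, a cell of the partition of the hyperplane F on which
  l \<ge> 0 extends along +v to such a cell of E; if w < 0 the same works along -v. A cell
  half_pos A v on which l > 0 off c forces w > 0 (look at c + v) and l > 0 on A off c; symmetrically
  on the negative side w < 0. So all such cells lie on one side, where uniqueness comes from
  the induction hypothesis.\<close>

lemma affine_add_scaled_direction:
  assumes "affine E" "a \<in> E" "v \<in> direction_of E"
  shows "a + t *\<^sub>R v \<in> E"
proof -
  obtain x y where "v = x - y" "x \<in> E" "y \<in> E"
    using assms(3) unfolding direction_of_def by blast
  then show ?thesis using mem_affine_3_minus[OF assms(1,2)] by simp
qed

lemma uminus_direction_of:
  assumes "v \<in> direction_of E"
  shows "- v \<in> direction_of E"
proof -
  obtain x y where "v = x - y" "x \<in> E" "y \<in> E"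
    using assms unfolding direction_of_def by blast
  then have "- v = y - x \<and> y \<in> E \<and> x \<in> E" by simp
  then show ?thesis unfolding direction_of_def by blast
qed

lemma affine_form_on_subset:
  "affine_form_on E l \<Longrightarrow> F \<subseteq> E \<Longrightarrow> affine_form_on F l"
  unfolding affine_form_on_def by blast

lemma affine_form_on_along_line:
  assumes "affine_form_on E l" "a \<in> E" "a + v \<in> E"
  shows "l (a + t *\<^sub>R v) = l a + t * (l (a + v) - l a)"
proof -
  have "l ((1 - t) *\<^sub>R a + t *\<^sub>R (a + v)) = (1 - t) * l a + t * l (a + v)"
    using assms unfolding affine_form_on_def by blast
  moreover have "(1 - t) *\<^sub>R a + t *\<^sub>R (a + v) = a + t *\<^sub>R v"
    by (simp add: algebra_simps)
  ultimately show ?thesis by (simp add: algebra_simps)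
qed

text \<open>Both sides are read off the common midpoint of a + v and c.\<close>

lemma affine_form_on_increment_eq:
  assumes "affine_form_on E l" "a \<in> E" "a + v \<in> E" "c \<in> E" "c + v \<in> E"
  shows "l (a + v) - l a = l (c + v) - l c"
proof -
  have "l ((1 - 1/2) *\<^sub>R (a + v) + (1/2) *\<^sub>R c) = (1 - 1/2) * l (a + v) + (1/2) * l c"
    "l ((1 - 1/2) *\<^sub>R a + (1/2) *\<^sub>R (c + v)) = (1 - 1/2) * l a + (1/2) * l (c + v)"
    using assms unfolding affine_form_on_def by blast+
  moreover have "(1 - 1/2::real) *\<^sub>R (a + v) + (1/2) *\<^sub>R c = (1 - 1/2::real) *\<^sub>R a + (1/2) *\<^sub>R (c + v)"
    by (simp add: algebra_simps)
  ultimately show ?thesis by simp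
qed

lemma affine_form_on_slope:
  assumes "affine E" "affine_form_on E l" "c \<in> E" "v \<in> direction_of E"
  obtains w where "\<And>a t. a \<in> E \<Longrightarrow> l (a + t *\<^sub>R v) = l a + t * w"
proof
  fix a t assume "a \<in> E"
  have "a + 1 *\<^sub>R v \<in> E" "c + 1 *\<^sub>R v \<in> E"
    using affine_add_scaled_direction assms \<open>a \<in> E\<close> by blast+
  then show "l (a + t *\<^sub>R v) = l a + t * (l (c + v) - l c)"
    using affine_form_on_along_line[OF assms(2) \<open>a \<in> E\<close>, of v t]
      affine_form_on_increment_eq[OF assms(2) \<open>a \<in> E\<close> _ assms(3)] by simp
qed

lemma half_neg_eq_half_pos_uminus: "half_neg A v = half_pos A (- v)"
proof (intro set_eqI iffI)
  fix x assume "x \<in> half_neg A v"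
  then obtain a t where "x = a + (- t) *\<^sub>R (- v)" "a \<in> A" "0 \<le> - t"
    unfolding half_neg_def by auto
  then show "x \<in> half_pos A (- v)" unfolding half_pos_def by blast
next
  fix x assume "x \<in> half_pos A (- v)"
  then obtain a t where "x = a + (- t) *\<^sub>R v" "a \<in> A" "- t \<le> 0"
    unfolding half_pos_def by auto
  then show "x \<in> half_neg A v" unfolding half_neg_def by blast
qed

lemma half_pos_memI: "a \<in> A \<Longrightarrow> 0 \<le> t \<Longrightarrow> a + t *\<^sub>R u \<in> half_pos A u"
  unfolding half_pos_def by blast

lemma subset_half_pos: "A \<subseteq> half_pos A u"
  using half_pos_memI[of _ A 0 u] by auto

lemma half_pos_subset:
  assumes "affine E" "A \<subseteq> E" "u \<in> direction_of E"
  shows "half_pos A u \<subseteq> E"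
  unfolding half_pos_def using affine_add_scaled_direction[OF assms(1) _ assms(3)] assms(2) by blast

lemma half_pos_nonneg:
  assumes "\<forall>a\<in>A. 0 \<le> l a" "\<And>a t. a \<in> A \<Longrightarrow> l (a + t *\<^sub>R u) = l a + t * w" "0 \<le> w"
  shows "\<forall>x\<in>half_pos A u. 0 \<le> l x"
  unfolding half_pos_def using assms by auto

lemma half_pos_pos_off_center:
  fixes l :: "'a::euclidean_space \<Rightarrow> real"
  assumes "c \<in> A" "l c = 0" "u \<noteq> 0" "l (c + u) = l c + s"
    and pos: "\<forall>x\<in>half_pos A u - {c}. 0 < l x"
  shows "0 < s \<and> (\<forall>x\<in>A - {c}. 0 < l x)"
proof
  have "c + 1 *\<^sub>R u \<in> half_pos A u"
    using assms(1) by (rule half_pos_memI) simp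
  moreover have "c + u \<noteq> c" using assms(3) by simp
  ultimately have "0 < l (c + u)" using pos by simp
  then show "0 < s" using assms(2,4) by simp
  show "\<forall>x\<in>A - {c}. 0 < l x" using pos subset_half_pos[of A u] by blast
qed

lemma half_cylinders_nonneg_cell:
  fixes l :: "'a::euclidean_space \<Rightarrow> real"
  assumes cells: "\<Union>(Pm \<union> Pp) \<subseteq> E"
    and slope: "\<And>a t. a \<in> E \<Longrightarrow> l (a + t *\<^sub>R v) = l a + t * w"
    and nonneg_m: "\<exists>A\<in>Pm. \<forall>x\<in>A. 0 \<le> l x" and nonneg_p: "\<exists>A\<in>Pp. \<forall>x\<in>A. 0 \<le> l x"
  shows "\<exists>A\<in>(\<lambda>A. half_neg A v) ` Pm \<union> (\<lambda>A. half_pos A v) ` Pp. \<forall>x\<in>A. 0 \<le> l x"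
proof (cases "0 \<le> w")
  case True
  obtain A where A: "A \<in> Pp" "\<forall>x\<in>A. 0 \<le> l x" using nonneg_p by blast
  then have "\<forall>x\<in>half_pos A v. 0 \<le> l x"
    using half_pos_nonneg[OF A(2) _ True] slope cells by blast
  with A(1) show ?thesis by blast
next
  case False
  obtain A where A: "A \<in> Pm" "\<forall>x\<in>A. 0 \<le> l x" using nonneg_m by blast
  have "l (a + t *\<^sub>R - v) = l a + t * - w" if "a \<in> A" for a t
    using slope[of a "- t"] that A(1) cells by auto
  then have "\<forall>x\<in>half_neg A v. 0 \<le> l x"
    using half_pos_nonneg[OF A(2), of "- v" "- w"] False by (simp add: half_neg_eq_half_pos_uminus)
  with A(1) show ?thesis by blast
qed

lemma half_cylinders_pos_cell_side:
  fixes l :: "'a::euclidean_space \<Rightarrow> real"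
  assumes cells: "\<And>A. A \<in> Pm \<union> Pp \<Longrightarrow> c \<in> A \<and> A \<subseteq> E"
    and "l c = 0" "v \<noteq> 0"
    and slope: "\<And>a t. a \<in> E \<Longrightarrow> l (a + t *\<^sub>R v) = l a + t * w"
    and C: "C \<in> (\<lambda>A. half_neg A v) ` Pm \<union> (\<lambda>A. half_pos A v) ` Pp" "\<forall>x\<in>C - {c}. 0 < l x"
  shows "(w < 0 \<and> (\<exists>A\<in>Pm. C = half_neg A v \<and> (\<forall>x\<in>A - {c}. 0 < l x)))
       \<or> (0 < w \<and> (\<exists>A\<in>Pp. C = half_pos A v \<and> (\<forall>x\<in>A - {c}. 0 < l x)))"
proof -
  from C(1) consider (neg) A where "A \<in> Pm" "C = half_neg A v"
    | (pos) A where "A \<in> Pp" "C = half_pos A v"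
    by blast
  then show ?thesis
  proof cases
    case neg
    then have "c \<in> A" "c \<in> E" using cells[of A] by auto
    then have "0 < - w \<and> (\<forall>x\<in>A - {c}. 0 < l x)"
      using half_pos_pos_off_center[of c A l "- v" "- w"] slope[of c "- 1"] C(2) neg(2) assms(2,3)
      by (simp add: half_neg_eq_half_pos_uminus)
    then show ?thesis using neg by auto
  next
    case pos
    then have "c \<in> A" "c \<in> E" using cells[of A] by auto
    then have "0 < w \<and> (\<forall>x\<in>A - {c}. 0 < l x)"
      using half_pos_pos_off_center[of c A l v w] slope[of c 1] C(2) pos(2) assms(2,3) by simp
    then show ?thesis using pos by blast
  qed
qed

lemma half_cylinders_unique_pos_cell:
  fixes l :: "'a::euclidean_space \<Rightarrow> real"
  assumes cells: "\<And>A. A \<in> Pm \<union> Pp \<Longrightarrow> c \<in> A \<and> A \<subseteq> E"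
    and "l c = 0" "v \<noteq> 0"
    and slope: "\<And>a t. a \<in> E \<Longrightarrow> l (a + t *\<^sub>R v) = l a + t * w"
    and unique_m: "\<forall>A\<in>Pm. \<forall>B\<in>Pm. (\<forall>x\<in>A - {c}. 0 < l x) \<and> (\<forall>x\<in>B - {c}. 0 < l x) \<longrightarrow> A = B"
    and unique_p: "\<forall>A\<in>Pp. \<forall>B\<in>Pp. (\<forall>x\<in>A - {c}. 0 < l x) \<and> (\<forall>x\<in>B - {c}. 0 < l x) \<longrightarrow> A = B"
  shows "\<forall>A'\<in>(\<lambda>A. half_neg A v) ` Pm \<union> (\<lambda>A. half_pos A v) ` Pp.
         \<forall>B'\<in>(\<lambda>A. half_neg A v) ` Pm \<union> (\<lambda>A. half_pos A v) ` Pp.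
           (\<forall>x\<in>A' - {c}. 0 < l x) \<and> (\<forall>x\<in>B' - {c}. 0 < l x) \<longrightarrow> A' = B'"
proof (intro ballI impI, elim conjE)
  fix A' B'
  assume A': "A' \<in> (\<lambda>A. half_neg A v) ` Pm \<union> (\<lambda>A. half_pos A v) ` Pp" "\<forall>x\<in>A' - {c}. 0 < l x"
    and B': "B' \<in> (\<lambda>A. half_neg A v) ` Pm \<union> (\<lambda>A. half_pos A v) ` Pp" "\<forall>x\<in>B' - {c}. 0 < l x"
  have side: "(w < 0 \<and> (\<exists>A\<in>Pm. C = half_neg A v \<and> (\<forall>x\<in>A - {c}. 0 < l x)))
       \<or> (0 < w \<and> (\<exists>A\<in>Pp. C = half_pos A v \<and> (\<forall>x\<in>A - {c}. 0 < l x)))"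
    if "C \<in> (\<lambda>A. half_neg A v) ` Pm \<union> (\<lambda>A. half_pos A v) ` Pp" "\<forall>x\<in>C - {c}. 0 < l x" for C
    by (rule half_cylinders_pos_cell_side) (fact cells assms(2,3) slope that)+
  show "A' = B'"
  proof (cases "w < 0")
    case True
    then obtain A B where "A \<in> Pm" "A' = half_neg A v" "\<forall>x\<in>A - {c}. 0 < l x"
      and "B \<in> Pm" "B' = half_neg B v" "\<forall>x\<in>B - {c}. 0 < l x"
      using side[OF A'] side[OF B'] by auto
    then show ?thesis using unique_m by blast
  next
    case False
    then obtain A B where "A \<in> Pp" "A' = half_pos A v" "\<forall>x\<in>A - {c}. 0 < l x"
      and "B \<in> Pp" "B' = half_pos B v" "\<forall>x\<in>B - {c}. 0 < l x"
      using side[OF A'] side[OF B'] by auto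
    then show ?thesis using unique_p by blast
  qed
qed

lemma yao_yao_center_mem: "yao_yao E P c \<Longrightarrow> c \<in> E"
  by (induction rule: yao_yao.induct) auto

lemma yao_yao_cell:
  assumes "yao_yao E P c" "A \<in> P"
  shows "c \<in> A \<and> A \<subseteq> E"
  using assms
proof (induction arbitrary: A rule: yao_yao.induct)
  case (base c)
  then show ?case by simp
next
  case (step E F v Pm c Pp)
  have extend: "c \<in> half_pos B u \<and> half_pos B u \<subseteq> E"
    if "c \<in> B \<and> B \<subseteq> F" "u \<in> direction_of E" for B u
    using subset_half_pos[of B u] half_pos_subset[OF step.hyps(1) _ that(2)] that(1) step.hyps(4)
    by blast
  from step.prems consider
      (neg) B where "B \<in> Pm" "A = half_pos B (- v)"
    | (pos) B where "B \<in> Pp" "A = half_pos B v"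
    by (auto simp: half_neg_eq_half_pos_uminus)
  then show ?case
  proof cases
    case neg
    then show ?thesis using extend step.IH(1) uminus_direction_of[OF step.hyps(6)] by blast
  next
    case pos
    then show ?thesis using extend step.IH(2) step.hyps(6) by blast
  qed
qed

lemma yao_yao_nonneg_cell_unique_pos_cell:
  assumes "yao_yao E P c" "affine_form_on E l" "l c = 0"
  shows "(\<exists>A\<in>P. \<forall>x\<in>A. l x \<ge> 0)
       \<and> (\<forall>A\<in>P. \<forall>B\<in>P. (\<forall>x\<in>A - {c}. l x > 0) \<and> (\<forall>x\<in>B - {c}. l x > 0) \<longrightarrow> A = B)"
  using assms
proof (induction rule: yao_yao.induct)
  case (base c)
  then show ?case by simp
next
  case (step E F v Pm c Pp)
  have "affine_form_on F l"
    using affine_form_on_subset step.prems(1) step.hyps(4) .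
  note IHm = step.IH(1)[OF this step.prems(2)] and IHp = step.IH(2)[OF this step.prems(2)]
  have cF: "c \<in> F" using yao_yao_center_mem[OF step.hyps(8)] .
  have cells: "c \<in> A \<and> A \<subseteq> E" if "A \<in> Pm \<union> Pp" for A
    using that yao_yao_cell[OF step.hyps(8)] yao_yao_cell[OF step.hyps(9)] step.hyps(4) by blast
  have "v \<noteq> 0"
  proof
    assume "v = 0"
    then have "v = c - c" by simp
    with cF step.hyps(7) show False unfolding direction_of_def by blast
  qed
  obtain w where slope: "\<And>a t. a \<in> E \<Longrightarrow> l (a + t *\<^sub>R v) = l a + t * w"
    using affine_form_on_slope[OF step.hyps(1) step.prems(1) _ step.hyps(6)] cF step.hyps(4) by blast
  have "\<Union>(Pm \<union> Pp) \<subseteq> E" using cells by blast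
  from half_cylinders_nonneg_cell[OF this slope conjunct1[OF IHm] conjunct1[OF IHp]]
    half_cylinders_unique_pos_cell[OF cells step.prems(2) \<open>v \<noteq> 0\<close> slope
      conjunct2[OF IHm] conjunct2[OF IHp]]
  show ?case ..
qed

theorem mainTheorem1:
  fixes E :: "'a::euclidean_space set" and P :: "'a set set" and c :: 'a
    and l :: "'a \<Rightarrow> real"
  assumes "affine E"
    and "yao_yao E P c"
    and "affine_form_on E l"
    and "l c = 0"
  shows "(\<exists>A\<in>P. \<forall>x\<in>A. l x \<ge> 0)
       \<and> (\<forall>A\<in>P. \<forall>B\<in>P. (\<forall>x\<in>A - {c}. l x > 0) \<and> (\<forall>x\<in>B - {c}. l x > 0) \<longrightarrow> A = B)"
  using yao_yao_nonneg_cell_unique_pos_cell[OF assms(2-4)] .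

end
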